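(* Let $W$ be a positive integer and let $\mathcal H$ be a real Hilbert space of dimension $d$ with $W<d\le\infty$. Let $\Phi:\mathbb R^W\to\mathcal H$ be a $C^2$ map such that the Jacobian (differential) $J_0=\frac{\partial\Phi}{\partial\mathbf w}(\mathbf 0)$ has full rank $W$. Then the set $F_\Phi$ of GF-learnable targets is not dense in $\mathcal H$.
   Context: For a target $\mathbf f\in\mathcal H$, let $L_{\mathbf f}(\mathbf w)=\frac12\|\mathbf f-\Phi(\mathbf w)\|^2_{\mathcal H}$ and let $\mathbf w(t)$, $t\ge0$, be the solution of the gradient flow $\frac{d\mathbf w}{dt}=-\nabla_{\mathbf w}L_{\mathbf f}(\mathbf w(t))$ with $\mathbf w(0)=\mathbf 0$. Then $F_\Phi=\{\mathbf f\in\mathcal H:\inf_{t\ge0}L_{\mathbf f}(\mathbf w(t))=0\}$. *)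

theory Defs
  imports "HOL-Analysis.Analysis"
begin

definition C2_map :: "('a::real_normed_vector \<Rightarrow> 'b::real_normed_vector) \<Rightarrow> bool" where
  "C2_map \<Phi> \<longleftrightarrow> (\<exists>D1 :: 'a \<Rightarrow> ('a \<Rightarrow>\<^sub>L 'b). \<exists>D2 :: 'a \<Rightarrow> ('a \<Rightarrow>\<^sub>L ('a \<Rightarrow>\<^sub>L 'b)).
      (\<forall>w. (\<Phi> has_derivative blinfun_apply (D1 w)) (at w)) \<and>
      (\<forall>w. (D1 has_derivative blinfun_apply (D2 w)) (at w)) \<and>
      continuous_on UNIV D2)"

definition loss :: "('a \<Rightarrow> 'h::real_inner) \<Rightarrow> 'h \<Rightarrow> 'a \<Rightarrow> real" where
  "loss \<Phi> f w = (1/2) * (norm (f - \<Phi> w))\<^sup>2"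

definition gf_solution :: "('a::real_inner \<Rightarrow> 'h::real_inner) \<Rightarrow> 'h \<Rightarrow> (real \<Rightarrow> 'a) \<Rightarrow> bool" where
  "gf_solution \<Phi> f w \<longleftrightarrow> w 0 = 0 \<and>
     (\<forall>t\<ge>0. \<exists>g. (loss \<Phi> f has_derivative (\<lambda>v. g \<bullet> v)) (at (w t)) \<and>
                 (w has_vector_derivative (- g)) (at t within {0..}))"

definition F_learnable :: "('a::real_inner \<Rightarrow> 'h::real_inner) \<Rightarrow> 'h set" where
  "F_learnable \<Phi> = {f. \<exists>w. gf_solution \<Phi> f w \<and> (INF t\<in>{0..}. loss \<Phi> f (w t)) = 0}"

end

(*
  Push the target off \<Phi> 0 by a small distance r in a direction u normal to the tangent
  space range J0; such u exists because dim H > W. Near 0 the map stays within O(|w|^2) of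
  its tangent space while J0 is bounded below, so for all targets near f0 = \<Phi> 0 + r u the
  loss on a small sphere |w| = \<rho> exceeds the initial loss at w = 0. The loss does not
  increase along the gradient flow, so the flow started at 0 never reaches that sphere, and
  inside the ball the distance from \<Phi> w to the target stays bounded below. Hence a whole
  ball of targets around f0 is not learnable.
*)
theory Submission
  imports Defs
begin

lemma linear_inj_if_dim_range:
  fixes J :: "'a::euclidean_space \<Rightarrow> 'b::real_vector"
  assumes lin: "linear J" and rank: "dim (range J) = DIM('a)"
  shows "inj J"
proof (rule linear_injective_0[OF lin, THEN iffD2], intro allI impI, rule ccontr)
  fix w assume Jw: "J w = 0" and w: "w \<noteq> 0"
  define B where "B = extend_basis {w}"
  have indw: "independent {w}" using w by simp
  have B: "independent B" "w \<in> B" "span B = UNIV"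
    using extend_basis_superset[OF indw] independent_extend_basis[OF indw]
      span_extend_basis[OF indw] by (auto simp: B_def)
  have fB: "finite B" using B(1) by (simp add: finiteI_independent)
  have cB: "card B = DIM('a)"
    using basis_card_eq_dim[of B UNIV] B by auto
  have "range J = span (J ` B)"
    using linear_span_image[OF lin, of B] B(3) by simp
  also have "J ` B = insert 0 (J ` (B - {w}))" using B(2) Jw by auto
  finally have "dim (range J) \<le> card (J ` (B - {w}))"
    using dim_le_card[of "range J" "J ` (B - {w})"] fB by simp
  also have "\<dots> \<le> card (B - {w})" using fB by (simp add: card_image_le)
  also have "\<dots> < DIM('a)" using cB B(2) fB by simp
  finally show False using rank by simp
qed

lemma independent_subset_range_card_le_DIM:
  fixes J :: "'a::euclidean_space \<Rightarrow> 'b::real_vector"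
  assumes lin: "linear J" and S: "independent S" "S \<subseteq> range J"
  shows "card S \<le> DIM('a)"
proof -
  have "S \<subseteq> span (J ` Basis)"
    using S(2) linear_span_image[OF lin, of Basis] by (simp add: span_Basis)
  then have "card S \<le> card (J ` Basis)"
    by (intro conjunct2[OF real_vector.independent_span_bound[OF _ S(1)]]) simp_all
  also have "\<dots> \<le> DIM('a)" by (rule card_image_le) simp
  finally show ?thesis .
qed

text \<open>\<open>v\<close> solves the normal equations \<open>A (J v) = A y\<close> for the adjoint \<open>A\<close> of \<open>J\<close>;
  they are solvable because \<open>A \<circ> J\<close> is an injective endomorphism of a finite-dimensional
  space, hence onto.\<close>
lemma linear_inj_exists_orthogonal_residual:
  fixes J :: "'a::euclidean_space \<Rightarrow> 'h::real_inner"
  assumes lin: "linear J" and inj: "inj J"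
  obtains v where "\<And>w. (y - J v) \<bullet> J w = 0"
proof -
  define A where "A x = (\<Sum>b\<in>Basis. (J b \<bullet> x) *\<^sub>R b)" for x
  have adj: "J w \<bullet> x = w \<bullet> A x" for w x
  proof -
    have "J w = (\<Sum>b\<in>Basis. (w \<bullet> b) *\<^sub>R J b)"
      using linear_sum[OF lin] linear_scale[OF lin] euclidean_representation[of w]
      by (metis (no_types, lifting) sum.cong)
    then show ?thesis by (simp add: A_def inner_sum_left inner_sum_right mult.commute)
  qed
  have linA: "linear A"
    by (rule linearI) (simp_all add: A_def inner_add_right scaleR_add_left sum.distrib scaleR_sum_right)
  have "inj (A \<circ> J)"
  proof (rule linear_injective_0[THEN iffD2])
    show "linear (A \<circ> J)" using linA lin by (rule linear_compose[rotated])
    show "\<forall>v. (A \<circ> J) v = 0 \<longrightarrow> v = 0"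
    proof (intro allI impI)
      fix v assume "(A \<circ> J) v = 0"
      then have "J v \<bullet> J v = 0" using adj[of v "J v"] by simp
      then show "v = 0" using inj linear_injective_0[OF lin] by simp
    qed
  qed
  then obtain v where v: "A (J v) = A y"
    using linear_inj_imp_surj[OF linear_compose[OF lin linA]] by (metis comp_apply surjD)
  have "(y - J v) \<bullet> J w = 0" for w
    using adj[of w] v linear_diff[OF linA] by (simp add: inner_commute inner_diff_right)
  then show thesis by (rule that)
qed

lemma linear_exists_unit_orthogonal_to_range:
  fixes J :: "'a::euclidean_space \<Rightarrow> 'h::real_inner"
    and S :: "'h set"
  assumes lin: "linear J" and inj: "inj J"
    and S: "independent S" "card S > DIM('a)"
  obtains u where "norm u = 1" "\<And>w. u \<bullet> J w = 0"
proof -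
  obtain s where s: "s \<in> S" "s \<notin> range J"
    using independent_subset_range_card_le_DIM[OF lin S(1)] S(2) by fastforce
  obtain v where v: "\<And>w. (s - J v) \<bullet> J w = 0"
    using linear_inj_exists_orthogonal_residual[OF lin inj] by blast
  have "s - J v \<noteq> 0" using s(2) by auto
  then show thesis
    by (intro that[of "sgn (s - J v)"]) (simp_all add: norm_sgn sgn_div_norm v)
qed

lemma linear_inj_bounded_below_pos_euclidean_domain:
  fixes J :: "'a::euclidean_space \<Rightarrow> 'b::real_normed_vector"
  assumes lin: "linear J" and inj: "inj J"
  obtains c where "c > 0" "\<And>w. c * norm w \<le> norm (J w)"
proof -
  have cont: "continuous_on (sphere 0 1) (\<lambda>w. norm (J w))"
    using lin by (intro continuous_intros) (simp add: linear_continuous_on linear_conv_bounded_linear)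
  obtain b :: 'a where "b \<in> Basis" using nonempty_Basis by blast
  then have "sphere (0::'a) 1 \<noteq> {}" by (auto intro!: exI[of _ b])
  then obtain x where x: "x \<in> sphere 0 1" and min: "\<And>y. y \<in> sphere 0 1 \<Longrightarrow> norm (J x) \<le> norm (J y)"
    using continuous_attains_inf[OF compact_sphere _ cont] by blast
  have "J x \<noteq> 0" using x inj linear_injective_0[OF lin] by fastforce
  moreover have "norm (J x) * norm w \<le> norm (J w)" for w
  proof (cases "w = 0")
    case False
    have "norm (J x) \<le> norm (J (sgn w))" using min False by (simp add: norm_sgn)
    also have "\<dots> = norm (J w) / norm w"
      by (simp add: sgn_div_norm linear_scale[OF lin] divide_inverse_commute)
    finally show ?thesis using False by (simp add: field_simps)
  qed simp
  ultimately show thesis by (intro that[of "norm (J x)"]) auto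
qed

lemma has_derivative_second_order_bound:
  fixes \<Phi> :: "'a::real_normed_vector \<Rightarrow> 'b::real_normed_vector"
  assumes d1: "\<And>w. (\<Phi> has_derivative blinfun_apply (D1 w)) (at w)"
    and d2: "(D1 has_derivative blinfun_apply D2) (at a)"
  obtains K \<rho> where "K > 0" "\<rho> > 0"
    "\<And>w. norm (w - a) < \<rho> \<Longrightarrow> norm (\<Phi> w - \<Phi> a - D1 a (w - a)) \<le> K * (norm (w - a))\<^sup>2"
proof -
  define K where "K = norm D2 + 1"
  have K: "K > 0" unfolding K_def using norm_ge_zero[of D2] by linarith
  obtain \<rho> where \<rho>: "\<rho> > 0"
    and lin2: "\<And>y. norm (y - a) < \<rho> \<Longrightarrow> norm (D1 y - D1 a - D2 (y - a)) \<le> 1 * norm (y - a)"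
    using d2 unfolding has_derivative_at_alt by (meson zero_less_one)
  have D1_lipschitz: "norm (D1 y - D1 a) \<le> K * norm (y - a)" if "norm (y - a) < \<rho>" for y
  proof -
    have "norm (D1 y - D1 a) \<le> norm (D1 y - D1 a - D2 (y - a)) + norm (D2 (y - a))"
      by (metis diff_add_cancel norm_triangle_ineq)
    also have "\<dots> \<le> norm (y - a) + norm D2 * norm (y - a)"
      using lin2[OF that] norm_blinfun[of D2 "y - a"] by simp
    finally show ?thesis by (simp add: K_def algebra_simps)
  qed
  have "norm (\<Phi> w - \<Phi> a - D1 a (w - a)) \<le> K * (norm (w - a))\<^sup>2" if w: "norm (w - a) < \<rho>" for w
  proof -
    let ?S = "cball a (norm (w - a))"
    have "norm (\<Phi> w - \<Phi> a - D1 a (w - a)) \<le> norm (w - a) * (K * norm (w - a))"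
    proof (rule differentiable_bound_linearization[where S="?S" and f'="\<lambda>x. blinfun_apply (D1 x)"])
      show "a + t *\<^sub>R (w - a) \<in> ?S" if "t \<in> {0..1}" for t
        using that mult_left_le_one_le[of "norm (w - a)" t]
        by (auto simp: dist_norm abs_if mult.commute)
      show "(\<Phi> has_derivative blinfun_apply (D1 x)) (at x within ?S)" for x
        using d1 has_derivative_at_withinI by blast
      show "onorm (blinfun_apply (D1 x) - blinfun_apply (D1 a)) \<le> K * norm (w - a)" if "x \<in> ?S" for x
      proof -
        have xa: "norm (x - a) \<le> norm (w - a)" using that by (simp add: dist_norm norm_minus_commute)
        have "onorm (blinfun_apply (D1 x) - blinfun_apply (D1 a)) = norm (D1 x - D1 a)"
          by (simp add: norm_blinfun.rep_eq fun_diff_def blinfun.diff_left[symmetric])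
        also have "\<dots> \<le> K * norm (x - a)" using D1_lipschitz xa w by simp
        also have "\<dots> \<le> K * norm (w - a)" using xa K by simp
        finally show ?thesis .
      qed
    qed simp
    then show ?thesis by (simp add: power2_eq_square algebra_simps)
  qed
  with K \<rho> show thesis by (rule that)
qed

lemma norm_scaleR_unit_minus_lower_bounds:
  fixes u a \<delta> :: "'h::real_inner"
  assumes u: "norm u = 1" "u \<bullet> a = 0" and e: "norm (\<delta> - a) \<le> e"
  shows "r - e \<le> norm (r *\<^sub>R u - \<delta>)"
    and "0 \<le> r \<Longrightarrow> e \<le> norm a \<Longrightarrow> r\<^sup>2 - 2 * r * e + (norm a - e)\<^sup>2 \<le> (norm (r *\<^sub>R u - \<delta>))\<^sup>2"
proof -
  have "u \<bullet> \<delta> = u \<bullet> (\<delta> - a)" using u(2) by (simp add: inner_diff_right)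
  also have "\<dots> \<le> norm (\<delta> - a)" using norm_cauchy_schwarz[of u "\<delta> - a"] u(1) by simp
  finally have u\<delta>: "u \<bullet> \<delta> \<le> e" using e by linarith
  have uu: "u \<bullet> u = 1" using u(1) by (simp add: dot_square_norm)
  have "r - e \<le> u \<bullet> (r *\<^sub>R u - \<delta>)" using u\<delta> uu by (simp add: inner_diff_right)
  also have "\<dots> \<le> norm (r *\<^sub>R u - \<delta>)" using norm_cauchy_schwarz[of u "r *\<^sub>R u - \<delta>"] u(1) by simp
  finally show "r - e \<le> norm (r *\<^sub>R u - \<delta>)" .
  show "r\<^sup>2 - 2 * r * e + (norm a - e)\<^sup>2 \<le> (norm (r *\<^sub>R u - \<delta>))\<^sup>2" if r: "0 \<le> r" and ea: "e \<le> norm a"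
  proof -
    have "norm a \<le> norm \<delta> + norm (\<delta> - a)" using norm_triangle_ineq4[of \<delta> "\<delta> - a"] by simp
    then have "(norm a - e)\<^sup>2 \<le> (norm \<delta>)\<^sup>2" using e ea by (intro power_mono) auto
    moreover have "(norm (r *\<^sub>R u - \<delta>))\<^sup>2 = r\<^sup>2 - 2 * r * (u \<bullet> \<delta>) + (norm \<delta>)\<^sup>2"
      using uu unfolding power2_norm_eq_inner
      by (simp add: inner_diff_left inner_diff_right inner_commute power2_eq_square algebra_simps)
    moreover have "r * (u \<bullet> \<delta>) \<le> r * e" using u\<delta> r by (rule mult_left_mono)
    ultimately show ?thesis by linarith
  qed
qed

text \<open>The target is \<open>\<Phi> 0 + r u\<close> with \<open>r = 2K\<rho>\<^sup>2\<close>: on the ball of radius \<open>\<rho>\<close> the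
  map moves at most \<open>K\<rho>\<^sup>2\<close> in direction \<open>u\<close>, while on its boundary sphere it has moved
  at least \<open>c\<rho>/2\<close> orthogonally to \<open>u\<close>.\<close>
lemma exists_trapped_target:
  fixes \<Phi> :: "'a::real_normed_vector \<Rightarrow> 'h::real_inner"
  assumes u: "norm u = 1" "\<And>v. u \<bullet> J v = 0"
    and c: "0 < c" "\<And>v. c * norm v \<le> norm (J v)"
    and K: "0 < K" "0 < \<rho>1" "\<And>v. norm v < \<rho>1 \<Longrightarrow> norm (\<Phi> v - \<Phi> 0 - J v) \<le> K * (norm v)\<^sup>2"
  obtains \<rho> m f0 \<sigma> where "0 < \<rho>" "0 < m" "norm (f0 - \<Phi> 0) < \<sigma>"
    "\<And>v. norm v = \<rho> \<Longrightarrow> \<sigma> \<le> norm (f0 - \<Phi> v)" "\<And>v. norm v \<le> \<rho> \<Longrightarrow> m \<le> norm (f0 - \<Phi> v)"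
proof -
  define \<rho> where "\<rho> = min (\<rho>1 / 2) (c / (8 * K))"
  define r where "r = 2 * K * \<rho>\<^sup>2"
  define \<sigma> where "\<sigma> = sqrt (r\<^sup>2 + c\<^sup>2 * \<rho>\<^sup>2 / 8)"
  have \<rho>: "0 < \<rho>" "\<rho> < \<rho>1" "K * \<rho> \<le> c / 8"
    using c K by (auto simp: \<rho>_def field_simps min_def)
  have r: "0 < r" using K \<rho> by (simp add: r_def)
  have f0: "\<Phi> 0 + r *\<^sub>R u - \<Phi> v = r *\<^sub>R u - (\<Phi> v - \<Phi> 0)" for v by simp
  have resid: "norm ((\<Phi> v - \<Phi> 0) - J v) \<le> K * \<rho>\<^sup>2" if "norm v \<le> \<rho>" for v
  proof -
    have "norm (\<Phi> v - \<Phi> 0 - J v) \<le> K * (norm v)\<^sup>2" using K(3) that \<rho>(2) by simp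
    also have "\<dots> \<le> K * \<rho>\<^sup>2" using K(1) that by (simp add: power_mono)
    finally show ?thesis .
  qed
  note bounds = norm_scaleR_unit_minus_lower_bounds[OF u(1) u(2) resid]
  show thesis
  proof (rule that[of \<rho> "K * \<rho>\<^sup>2" "\<Phi> 0 + r *\<^sub>R u" \<sigma>])
    show "0 < \<rho>" "0 < K * \<rho>\<^sup>2" using \<rho> K by simp_all
    have "r = sqrt (r\<^sup>2)" using r by simp
    also have "\<dots> < \<sigma>" unfolding \<sigma>_def using c \<rho> by (intro real_sqrt_less_mono) simp
    finally show "norm (\<Phi> 0 + r *\<^sub>R u - \<Phi> 0) < \<sigma>" using u(1) r by simp
    show "K * \<rho>\<^sup>2 \<le> norm (\<Phi> 0 + r *\<^sub>R u - \<Phi> v)" if "norm v \<le> \<rho>" for v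
      unfolding f0 using bounds(1)[OF that, of r] by (simp add: r_def)
    show "\<sigma> \<le> norm (\<Phi> 0 + r *\<^sub>R u - \<Phi> v)" if v: "norm v = \<rho>" for v
    proof -
      have c\<rho>: "0 < c * \<rho>" using c \<rho> by simp
      have cJ: "c * \<rho> \<le> norm (J v)" using c(2)[of v] v by simp
      have K\<rho>2: "K * \<rho>\<^sup>2 \<le> c * \<rho> / 8"
        using mult_right_mono[OF \<rho>(3), of \<rho>] \<rho>(1) by (simp add: power2_eq_square mult.assoc)
      have "(K * \<rho>)\<^sup>2 \<le> (c / 8)\<^sup>2" using \<rho> K by (intro power_mono) auto
      then have cross: "2 * r * (K * \<rho>\<^sup>2) \<le> c\<^sup>2 * \<rho>\<^sup>2 / 16"
        using mult_right_mono[of "(K * \<rho>)\<^sup>2" "(c / 8)\<^sup>2" "4 * \<rho>\<^sup>2"]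
        by (simp add: r_def power2_eq_square algebra_simps)
      have "(c * \<rho> / 2)\<^sup>2 \<le> (norm (J v) - K * \<rho>\<^sup>2)\<^sup>2"
        using cJ K\<rho>2 c\<rho> by (intro power_mono) auto
      then have far: "c\<^sup>2 * \<rho>\<^sup>2 / 4 \<le> (norm (J v) - K * \<rho>\<^sup>2)\<^sup>2"
        by (simp add: power_mult_distrib power_divide)
      have "K * \<rho>\<^sup>2 \<le> norm (J v)" using cJ K\<rho>2 c\<rho> by linarith
      then have "r\<^sup>2 - 2 * r * (K * \<rho>\<^sup>2) + (norm (J v) - K * \<rho>\<^sup>2)\<^sup>2 \<le> (norm (\<Phi> 0 + r *\<^sub>R u - \<Phi> v))\<^sup>2"
        unfolding f0 using bounds(2)[of v r] v r by simp
      moreover have "0 \<le> c\<^sup>2 * \<rho>\<^sup>2" by simp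
      ultimately have "r\<^sup>2 + c\<^sup>2 * \<rho>\<^sup>2 / 8 \<le> (norm (\<Phi> 0 + r *\<^sub>R u - \<Phi> v))\<^sup>2"
        using cross far by linarith
      then have "\<sigma> \<le> sqrt ((norm (\<Phi> 0 + r *\<^sub>R u - \<Phi> v))\<^sup>2)"
        unfolding \<sigma>_def by (rule real_sqrt_le_mono)
      then show ?thesis by simp
    qed
  qed
qed

lemma gf_solution_continuous_on:
  assumes "gf_solution \<Phi> f w"
  shows "continuous_on {0..} w"
  unfolding continuous_on_eq_continuous_within
  using assms has_vector_derivative_continuous by (fastforce simp: gf_solution_def)

lemma gf_solution_loss_le_initial:
  assumes gf: "gf_solution \<Phi> f w" and t: "0 \<le> t"
  shows "loss \<Phi> f (w t) \<le> loss \<Phi> f (w 0)"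
proof -
  obtain G where G: "\<And>t. 0 \<le> t \<Longrightarrow> (loss \<Phi> f has_derivative (\<lambda>v. G t \<bullet> v)) (at (w t))"
    "\<And>t. 0 \<le> t \<Longrightarrow> (w has_vector_derivative - G t) (at t within {0..})"
    using gf unfolding gf_solution_def by metis
  have "((loss \<Phi> f \<circ> w) has_derivative (\<lambda>h. G x \<bullet> (h *\<^sub>R - G x))) (at x within {0..t})"
    if "0 \<le> x" "x \<le> t" for x
  proof -
    have "(w has_derivative (\<lambda>h. h *\<^sub>R - G x)) (at x within {0..t})"
      using G(2)[OF that(1)] by (auto simp: has_vector_derivative_def intro: has_derivative_subset)
    from diff_chain_within[OF this has_derivative_at_withinI[OF G(1)[OF that(1)]]]
    show ?thesis by (simp add: o_def)
  qed
  from mvt_very_simple[OF t this] obtain x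
    where "(loss \<Phi> f \<circ> w) t - (loss \<Phi> f \<circ> w) 0 = G x \<bullet> ((t - 0) *\<^sub>R - G x)"
    by blast
  then have "loss \<Phi> f (w t) - loss \<Phi> f (w 0) = - t * (G x \<bullet> G x)" by simp
  moreover have "0 \<le> t * (G x \<bullet> G x)" using t by simp
  ultimately show ?thesis by linarith
qed

lemma continuous_path_trapped_in_ball:
  fixes w :: "real \<Rightarrow> 'a::real_normed_vector" and L :: "'a \<Rightarrow> real"
  assumes cont: "continuous_on {0..} w" and \<rho>: "0 < \<rho>"
    and below: "\<And>t. 0 \<le> t \<Longrightarrow> L (w t) \<le> L (w 0)"
    and sphere: "\<And>v. norm (v - w 0) = \<rho> \<Longrightarrow> L (w 0) < L v"
    and t: "0 \<le> t"
  shows "norm (w t - w 0) < \<rho>"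
proof (rule ccontr)
  assume "\<not> norm (w t - w 0) < \<rho>"
  moreover have "continuous_on {0..t} (\<lambda>s. norm (w s - w 0))"
    by (intro continuous_intros continuous_on_subset[OF cont]) auto
  ultimately obtain s where s: "0 \<le> s" "s \<le> t" "norm (w s - w 0) = \<rho>"
    using IVT'[of "\<lambda>s. norm (w s - w 0)" 0 \<rho> t] t \<rho> by auto
  show False using below[OF s(1)] sphere[OF s(3)] by simp
qed

lemma trapped_target_not_learnable:
  fixes \<Phi> :: "'a::real_inner \<Rightarrow> 'h::real_inner"
  assumes \<rho>: "0 < \<rho>" and m: "0 < m"
    and sphere: "\<And>v. norm v = \<rho> \<Longrightarrow> norm (f - \<Phi> 0) < norm (f - \<Phi> v)"
    and inside: "\<And>v. norm v \<le> \<rho> \<Longrightarrow> m \<le> norm (f - \<Phi> v)"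
  shows "f \<notin> F_learnable \<Phi>"
proof
  assume "f \<in> F_learnable \<Phi>"
  then obtain w where gf: "gf_solution \<Phi> f w" and inf0: "(INF t\<in>{0..}. loss \<Phi> f (w t)) = 0"
    unfolding F_learnable_def by blast
  have w0: "w 0 = 0" using gf by (simp add: gf_solution_def)
  have "m\<^sup>2 / 2 \<le> loss \<Phi> f (w t)" if t: "t \<in> {0..}" for t
  proof -
    have "loss \<Phi> f (w 0) < loss \<Phi> f v" if "norm (v - w 0) = \<rho>" for v
      using sphere[of v] that w0 by (simp add: loss_def power_strict_mono)
    then have "norm (w t - w 0) < \<rho>"
      using continuous_path_trapped_in_ball[where L="loss \<Phi> f", OF gf_solution_continuous_on[OF gf] \<rho>
          gf_solution_loss_le_initial[OF gf]] t by simp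
    then have "norm (w t) < \<rho>" using w0 by simp
    then have "m \<le> norm (f - \<Phi> (w t))" using inside by simp
    then show ?thesis using m by (simp add: loss_def power_mono)
  qed
  then have "m\<^sup>2 / 2 \<le> (INF t\<in>{0..}. loss \<Phi> f (w t))"
    by (intro cINF_greatest) auto
  with inf0 m show False by simp
qed

lemma not_learnable_near_trapped_target:
  fixes \<Phi> :: "'a::real_inner \<Rightarrow> 'h::real_inner"
  assumes \<rho>: "0 < \<rho>" and m: "0 < m" and gap: "norm (f0 - \<Phi> 0) < \<sigma>"
    and sphere: "\<And>v. norm v = \<rho> \<Longrightarrow> \<sigma> \<le> norm (f0 - \<Phi> v)"
    and inside: "\<And>v. norm v \<le> \<rho> \<Longrightarrow> m \<le> norm (f0 - \<Phi> v)"
  obtains \<eta> where "0 < \<eta>" "ball f0 \<eta> \<inter> F_learnable \<Phi> = {}"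
proof
  define \<eta> where "\<eta> = min (m / 2) ((\<sigma> - norm (f0 - \<Phi> 0)) / 2)"
  show "0 < \<eta>" using m gap by (simp add: \<eta>_def)
  have \<eta>_le: "2 * \<eta> \<le> m" "2 * \<eta> \<le> \<sigma> - norm (f0 - \<Phi> 0)"
    by (auto simp: \<eta>_def min_def)
  have "f \<notin> F_learnable \<Phi>" if f: "dist f0 f < \<eta>" for f
  proof -
    have close: "norm (f0 - \<Phi> v) - \<eta> < norm (f - \<Phi> v)" "norm (f - \<Phi> v) < norm (f0 - \<Phi> v) + \<eta>" for v
      using norm_triangle_ineq3[of "f - \<Phi> v" "f0 - \<Phi> v"] f
      by (simp_all add: dist_norm norm_minus_commute abs_less_iff)
    show ?thesis
    proof (rule trapped_target_not_learnable[OF \<rho>])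
      show "0 < m / 2" using m by simp
      show "norm (f - \<Phi> 0) < norm (f - \<Phi> v)" if "norm v = \<rho>" for v
        using close[of 0] close[of v] sphere[OF that] \<eta>_le by linarith
      show "m / 2 \<le> norm (f - \<Phi> v)" if "norm v \<le> \<rho>" for v
        using close[of v] inside[OF that] \<eta>_le by linarith
    qed
  qed
  then show "ball f0 \<eta> \<inter> F_learnable \<Phi> = {}" by auto
qed

theorem theorem2:
  fixes \<Phi> :: "real^'n \<Rightarrow> 'h::{real_inner, complete_space}"
    and J0 :: "real^'n \<Rightarrow> 'h"
  assumes dimH: "\<exists>S::'h set. finite S \<and> independent S \<and> card S > CARD('n)"
    and C2: "C2_map \<Phi>"
    and J0: "(\<Phi> has_derivative J0) (at 0)"
    and rank: "dim (range J0) = CARD('n)"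
  shows "closure (F_learnable \<Phi>) \<noteq> UNIV"
proof -
  obtain D1 :: "(real^'n) \<Rightarrow> ((real^'n) \<Rightarrow>\<^sub>L 'h)" and D2
    where d1: "\<And>w. (\<Phi> has_derivative blinfun_apply (D1 w)) (at w)"
      and d2: "\<And>w. (D1 has_derivative blinfun_apply (D2 w)) (at w)"
    using C2 unfolding C2_map_def by blast
  have J0_D1: "J0 = blinfun_apply (D1 0)" using has_derivative_unique[OF J0 d1[of 0]] .
  have lin: "linear J0" using J0 has_derivative_linear by blast
  have inj: "inj J0" using linear_inj_if_dim_range[OF lin] rank by simp
  obtain c where c: "0 < c" "\<And>w. c * norm w \<le> norm (J0 w)"
    using linear_inj_bounded_below_pos_euclidean_domain[OF lin inj] by blast
  obtain u where u: "norm u = 1" "\<And>w. u \<bullet> J0 w = 0"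
    using dimH linear_exists_unit_orthogonal_to_range[OF lin inj] by auto
  obtain K \<rho>1 where K: "0 < K" "0 < \<rho>1"
    "\<And>w. norm w < \<rho>1 \<Longrightarrow> norm (\<Phi> w - \<Phi> 0 - J0 w) \<le> K * (norm w)\<^sup>2"
    using has_derivative_second_order_bound[OF d1 d2[of 0]] unfolding J0_D1 by auto
  obtain \<rho> m f0 \<sigma> where "0 < \<rho>" "0 < m" "norm (f0 - \<Phi> 0) < \<sigma>"
    "\<And>v. norm v = \<rho> \<Longrightarrow> \<sigma> \<le> norm (f0 - \<Phi> v)" "\<And>v. norm v \<le> \<rho> \<Longrightarrow> m \<le> norm (f0 - \<Phi> v)"
    using exists_trapped_target[OF u c K] by metis
  then obtain \<eta> where "0 < \<eta>" "ball f0 \<eta> \<inter> F_learnable \<Phi> = {}"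
    by (rule not_learnable_near_trapped_target)
  then have "f0 \<notin> closure (F_learnable \<Phi>)"
    using open_Int_closure_eq_empty[of "ball f0 \<eta>" "F_learnable \<Phi>"] centre_in_ball[of f0 \<eta>] by blast
  then show ?thesis by auto
qed

end
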